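(* Let $x\cdot y$ be a PA-structure on $(\mathfrak{g},\mathfrak{n})$, where $\mathfrak{g}$ and $\mathfrak{n}$ are $2$-step nilpotent, and suppose that $$[L(x)+R(x),\mathrm{ad}(y)]=\mathrm{ad}(x\cdot y+y\cdot x)\quad\text{for all }x,y\in V. \qquad (\ast)$$ Then for all $x,y\in V$: $$[L(x)+R(x),\mathrm{ad}(y)]=[L(y)+R(y),\mathrm{ad}(x)],$$ $$2[L(x),\mathrm{ad}(y)]+2[\mathrm{ad}(x),L(y)]=[\mathrm{ad}(y),\mathrm{Ad}(x)]+[\mathrm{Ad}(y),\mathrm{ad}(x)].$$
   Context: Let $K$ be a field of characteristic zero and $V$ a finite-dimensional vector space over $K$. Let $\mathfrak{g}=(V,[\,,])$ and $\mathfrak{n}=(V,\{\,,\})$ be two Lie algebra structures on $V$. A post-Lie algebra structure (PA-structure) on the pair $(\mathfrak{g},\mathfrak{n})$ is a $K$-bilinear product $x\cdot y$ on $V$ satisfying, for all $x,y,z\in V$: (i) $x\cdot y-y\cdot x=[x,y]-\{x,y\}$; (ii) $[x,y]\cdot z=x\cdot(y\cdot z)-y\cdot(x\cdot z)$; (iii) $x\cdot\{y,z\}=\{x\cdot y,z\}+\{y,x\cdot z\}$. Write $L(x)(y)=x\cdot y$, $R(x)(y)=y\cdot x$, $\mathrm{ad}(x)(y)=[x,y]$, $\mathrm{Ad}(x)(y)=\{x,y\}$; brackets of operators are commutators in $\mathrm{End}(V)$. A Lie algebra is called $2$-step nilpotent here if it is nilpotent of class at most $2$, i.e. all brackets of the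 form $[[x,y],z]$ vanish. *)

theory Defs
  imports Main HOL.Vector_Spaces "HOL-Library.Function_Algebras"
begin

definition bilinear_map :: "('k::field \<Rightarrow> 'v::ab_group_add \<Rightarrow> 'v) \<Rightarrow> ('v \<Rightarrow> 'v \<Rightarrow> 'v) \<Rightarrow> bool" where
  "bilinear_map scale p \<longleftrightarrow>
     (\<forall>x y z. p (x + y) z = p x z + p y z) \<and>
     (\<forall>x y z. p x (y + z) = p x y + p x z) \<and>
     (\<forall>a x y. p (scale a x) y = scale a (p x y)) \<and>
     (\<forall>a x y. p x (scale a y) = scale a (p x y))"

definition lie_algebra :: "('k::field \<Rightarrow> 'v::ab_group_add \<Rightarrow> 'v) \<Rightarrow> ('v \<Rightarrow> 'v \<Rightarrow> 'v) \<Rightarrow> bool" where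
  "lie_algebra scale br \<longleftrightarrow>
     bilinear_map scale br \<and>
     (\<forall>x. br x x = 0) \<and>
     (\<forall>x y z. br x (br y z) + br y (br z x) + br z (br x y) = 0)"

definition two_step_nilpotent :: "('v::ab_group_add \<Rightarrow> 'v \<Rightarrow> 'v) \<Rightarrow> bool" where
  "two_step_nilpotent br \<longleftrightarrow> (\<forall>x y z. br (br x y) z = 0)"

text \<open>Post-Lie algebra structure on the pair (g, n) = ((V,br), (V,nb)).\<close>
definition PA_structure ::
  "('k::field \<Rightarrow> 'v::ab_group_add \<Rightarrow> 'v) \<Rightarrow> ('v \<Rightarrow> 'v \<Rightarrow> 'v) \<Rightarrow> ('v \<Rightarrow> 'v \<Rightarrow> 'v) \<Rightarrow> ('v \<Rightarrow> 'v \<Rightarrow> 'v) \<Rightarrow> bool" where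
  "PA_structure scale br nb dot \<longleftrightarrow>
     bilinear_map scale dot \<and>
     (\<forall>x y. dot x y - dot y x = br x y - nb x y) \<and>
     (\<forall>x y z. dot (br x y) z = dot x (dot y z) - dot y (dot x z)) \<and>
     (\<forall>x y z. dot x (nb y z) = nb (dot x y) z + nb y (dot x z))"

definition commutator :: "('v::ab_group_add \<Rightarrow> 'v) \<Rightarrow> ('v \<Rightarrow> 'v) \<Rightarrow> 'v \<Rightarrow> 'v" where
  "commutator f g = (\<lambda>v. f (g v) - g (f v))"

definition Lop :: "('v \<Rightarrow> 'v \<Rightarrow> 'v) \<Rightarrow> 'v \<Rightarrow> 'v \<Rightarrow> 'v" where
  "Lop dot x = (\<lambda>y. dot x y)"

definition Rop :: "('v \<Rightarrow> 'v \<Rightarrow> 'v) \<Rightarrow> 'v \<Rightarrow> 'v \<Rightarrow> 'v" where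
  "Rop dot x = (\<lambda>y. dot y x)"

definition adop :: "('v \<Rightarrow> 'v \<Rightarrow> 'v) \<Rightarrow> 'v \<Rightarrow> 'v \<Rightarrow> 'v" where
  "adop br x = (\<lambda>y. br x y)"

end

theory Submission
  imports Defs
begin

text \<open>Evaluated at z, the operator [L(x)+R(x), ad(y)] reduces, by identity (i) of the
PA-structure and because every double bracket of \<open>\<g>\<close> vanishes, to
\<open>2 x\<cdot>[y,z] + {x,[y,z]} - 2[y,x\<cdot>z] - [y,{x,z}]\<close>.  The hypothesis (\<open>\<ast>\<close>) makes this symmetric in
x and y because x\<cdot>y + y\<cdot>x is; moving the terms across gives the second identity, and the
first one is immediate.\<close>

lemma lie_algebra_add_left:
  "lie_algebra scale br \<Longrightarrow> br (u + v) a = br u a + br v a"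
  unfolding lie_algebra_def bilinear_map_def by blast

lemma lie_algebra_add_right:
  "lie_algebra scale br \<Longrightarrow> br a (u + v) = br a u + br a v"
  unfolding lie_algebra_def bilinear_map_def by blast

lemma lie_algebra_diff_right:
  assumes "lie_algebra scale br"
  shows "br a (u - v) = br a u - br a v"
  using lie_algebra_add_right[OF assms, of a "u - v" v] by (simp add: eq_diff_eq)

lemma lie_algebra_antisym:
  assumes g: "lie_algebra scale br"
  shows "br a b = - br b a"
proof -
  have alt: "\<And>c. br c c = 0"
    using g unfolding lie_algebra_def by blast
  have "br (a + b) (a + b) = br a a + br a b + (br b a + br b b)"
    by (simp add: lie_algebra_add_left[OF g] lie_algebra_add_right[OF g] add.assoc)
  then have "br a b + br b a = 0"
    by (simp add: alt)
  then show ?thesis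
    by (simp add: eq_neg_iff_add_eq_0)
qed

lemma two_step_nilpotent_right:
  assumes "lie_algebra scale br" and "two_step_nilpotent br"
  shows "br a (br b c) = 0"
  using assms lie_algebra_antisym[OF assms(1), of a "br b c"]
  unfolding two_step_nilpotent_def by simp

lemma PA_structure_dot_swap:
  assumes "PA_structure scale br nb dot"
  shows "dot b a = dot a b - br a b + nb a b"
proof -
  have "dot a b - dot b a = br a b - nb a b"
    using assms unfolding PA_structure_def by blast
  then show ?thesis
    by (simp add: algebra_simps)
qed

lemma commutator_LR_ad_two_step:
  assumes g: "lie_algebra scale br" and g2: "two_step_nilpotent br"
    and pa: "PA_structure scale br nb dot"
  shows "commutator (Lop dot x + Rop dot x) (adop br y) z
       = dot x (br y z) + dot x (br y z) + nb x (br y z)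
         - (br y (dot x z) + br y (dot x z) + br y (nb x z))"
proof -
  note nil = two_step_nilpotent_right[OF g g2]
  have "dot (br y z) x = dot x (br y z) + nb x (br y z)"
    using PA_structure_dot_swap[OF pa, where a = x and b = "br y z"] nil by simp
  moreover have "br y (dot x z + dot z x) = br y (dot x z) + br y (dot x z) + br y (nb x z)"
    using PA_structure_dot_swap[OF pa, where a = x and b = z] nil
    by (simp add: lie_algebra_add_right[OF g] lie_algebra_diff_right[OF g])
  ultimately show ?thesis
    by (simp add: commutator_def Lop_def Rop_def adop_def add.assoc)
qed

text \<open>Only the Lie algebra \<open>\<g>\<close>, its nilpotency and identity (i) of the PA-structure are used.\<close>

theorem lemma4p2:
  fixes scale :: "'k::field_char_0 \<Rightarrow> 'v::ab_group_add \<Rightarrow> 'v"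
    and br nb dot :: "'v \<Rightarrow> 'v \<Rightarrow> 'v"
    and Basis :: "'v set"
  assumes fdvs: "finite_dimensional_vector_space scale Basis"
    and g: "lie_algebra scale br"
    and n: "lie_algebra scale nb"
    and g2: "two_step_nilpotent br"
    and n2: "two_step_nilpotent nb"
    and pa: "PA_structure scale br nb dot"
    and star: "\<And>x y. commutator (Lop dot x + Rop dot x) (adop br y)
                       = adop br (dot x y + dot y x)"
  shows "\<forall>x y.
     commutator (Lop dot x + Rop dot x) (adop br y) = commutator (Lop dot y + Rop dot y) (adop br x) \<and>
     (commutator (Lop dot x) (adop br y) + commutator (Lop dot x) (adop br y))
       + (commutator (adop br x) (Lop dot y) + commutator (adop br x) (Lop dot y))
       = commutator (adop br y) (adop nb x) + commutator (adop nb y) (adop br x)"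
proof (intro allI conjI)
  fix x y
  show symm: "commutator (Lop dot x + Rop dot x) (adop br y) = commutator (Lop dot y + Rop dot y) (adop br x)"
    using star[of x y] star[of y x] by (simp add: add.commute)
  show "(commutator (Lop dot x) (adop br y) + commutator (Lop dot x) (adop br y))
       + (commutator (adop br x) (Lop dot y) + commutator (adop br x) (Lop dot y))
       = commutator (adop br y) (adop nb x) + commutator (adop nb y) (adop br x)"
  proof
    fix z
    from fun_cong[OF symm, of z] show "((commutator (Lop dot x) (adop br y) + commutator (Lop dot x) (adop br y))
       + (commutator (adop br x) (Lop dot y) + commutator (adop br x) (Lop dot y))) z
       = (commutator (adop br y) (adop nb x) + commutator (adop nb y) (adop br x)) z"
      unfolding commutator_LR_ad_two_step[OF g g2 pa]
      by (simp add: commutator_def Lop_def adop_def algebra_simps)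
  qed
qed

end
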